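(* There exists an absolute constant $C_3<1$ such that the following holds. Let $0<\lambda\leq \frac{9}{10}$, let $p$ be a prime with $p> \frac{2}{\lambda}$, and let $Y_1,Y_2,Y_3$ be independent, identically distributed random variables taking values in $\mathbb{Z}_p$ such that $$\max_{x\in \mathbb{Z}_p} \mathbb{P}[Y_1=x]\leq \lambda.$$ Set $Y=Y_1+Y_2+Y_3$ (sum in $\mathbb{Z}_p$). Then $$\max_{x\in \mathbb{Z}_p} \mathbb{P}[Y=x]\leq C_3\lambda.$$
   Context: $\mathbb{Z}_p$ denotes the cyclic group of integers modulo the prime $p$. *)

theory Defs
  imports "HOL-Probability.Probability" "HOL-Computational_Algebra.Primes"
begin

text \<open>Elements of Z_p are represented by the integers 0..p-1. A Z_p-valued random
variable is represented by its law, an int pmf supported in {0..<p}.\<close>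

definition sum3_law :: "nat \<Rightarrow> int pmf \<Rightarrow> int pmf" where
  "sum3_law p q =
     bind_pmf q (\<lambda>y1. bind_pmf q (\<lambda>y2. bind_pmf q (\<lambda>y3.
       return_pmf ((y1 + y2 + y3) mod int p))))"

end

theory Submission
  imports Defs "HOL-Number_Theory.Cong"
begin

text \<open>Let \<open>Q\<close> be the law of \<open>Y\<^sub>1\<close> and suppose \<open>P[Y = x] > (1 - 1/10000) \<lambda>\<close>. Since
\<open>P[Y\<^sub>2 + Y\<^sub>3 = c] \<le> \<lambda>\<close> for every \<open>c\<close>, the set \<open>G\<close> of those \<open>a\<close> with
\<open>P[Y\<^sub>2 + Y\<^sub>3 = x - a] \<ge> 0.99 \<lambda>\<close> has \<open>Q\<close>-mass above \<open>0.99\<close>, hence \<open>|G| \<lambda> > 0.99\<close>.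
Expanding \<open>\<Sum>\<^sub>z (Q(x-a-z) + Q(x-b-z) - 2 Q(z))\<^sup>2 \<ge> 0\<close> shows that for \<open>a, b \<in> G\<close> the
difference \<open>a - b\<close> is taken by \<open>Y\<^sub>2 - Y\<^sub>1\<close> with probability at least \<open>0.96 \<lambda>\<close>, so
\<open>G - G\<close> has at most \<open>1 / (0.96 \<lambda>)\<close> elements. The Cauchy-Davenport theorem gives
\<open>|G - G| \<ge> min p (2|G| - 1)\<close>, contradicting \<open>p \<lambda> > 2\<close> in the first case and
\<open>\<lambda> \<le> 9/10\<close> in the second. So \<open>C\<^sub>3 = 1 - 1/10000\<close> works.\<close>

lemma bij_betw_add_mod:
  fixes m :: int
  assumes "0 < m"
  shows "bij_betw (\<lambda>z. (c + z) mod m) {0..<m} {0..<m}"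
  by (rule bij_betw_byWitness[where f' = "\<lambda>z. (z - c) mod m"])
    (use assms in \<open>auto simp: mod_add_right_eq mod_diff_left_eq\<close>)

lemma bij_betw_diff_mod:
  fixes m :: int
  assumes "0 < m"
  shows "bij_betw (\<lambda>z. (c - z) mod m) {0..<m} {0..<m}"
  by (rule bij_betw_byWitness[where f' = "\<lambda>z. (c - z) mod m"])
    (use assms in \<open>auto simp: mod_diff_right_eq\<close>)

lemma sum_add_mod:
  fixes m :: int
  assumes "0 < m"
  shows "(\<Sum>z\<in>{0..<m}. F ((c + z) mod m)) = sum F {0..<m}"
  using sum.reindex_bij_betw[OF bij_betw_add_mod[OF assms]] .

lemma sum_diff_mod:
  fixes m :: int
  assumes "0 < m"
  shows "(\<Sum>z\<in>{0..<m}. F ((c - z) mod m)) = sum F {0..<m}"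
  using sum.reindex_bij_betw[OF bij_betw_diff_mod[OF assms]] .

lemma closed_under_add_mod_eq_residues:
  fixes m d :: int
  assumes A: "A \<subseteq> {0..<m}" and "a0 \<in> A" and "coprime d m"
    and closed: "\<And>a. a \<in> A \<Longrightarrow> (a + d) mod m \<in> A"
  shows "A = {0..<m}"
proof (rule subset_antisym[OF A])
  have orbit: "(a0 + int k * d) mod m \<in> A" for k
  proof (induction k)
    case 0
    show ?case using assms(1,2) by auto
  next
    case (Suc k)
    have "(a0 + int (Suc k) * d) mod m = ((a0 + int k * d) mod m + d) mod m"
      by (simp add: mod_add_left_eq mod_add_right_eq algebra_simps)
    with closed[OF Suc] show ?case by simp
  qed
  obtain d' where d': "[d * d' = 1] (mod m)"
    using cong_solve_coprime_int \<open>coprime d m\<close> by blast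
  show "{0..<m} \<subseteq> A"
  proof
    fix y assume y: "y \<in> {0..<m}"
    define k where "k = ((y - a0) * d') mod m"
    have "[a0 + k * d = a0 + (y - a0) * (d * d')] (mod m)"
      unfolding k_def by (intro cong_add cong_refl) (simp add: cong_def mod_mult_right_eq algebra_simps)
    also have "[a0 + (y - a0) * (d * d') = a0 + (y - a0) * 1] (mod m)"
      by (intro cong_add cong_mult cong_refl d')
    finally have "(a0 + int (nat k) * d) mod m = y"
      using y by (simp add: cong_def k_def)
    then show "y \<in> A" using orbit by metis
  qed
qed

section \<open>The Cauchy-Davenport theorem\<close>

definition sumset_mod :: "int \<Rightarrow> int set \<Rightarrow> int set \<Rightarrow> int set" where
  "sumset_mod m A B = (\<lambda>(a, b). (a + b) mod m) ` (A \<times> B)"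

lemma sumset_mod_subset: "0 < m \<Longrightarrow> sumset_mod m A B \<subseteq> {0..<m}"
  unfolding sumset_mod_def by auto

lemma card_sumset_mod_singleton:
  assumes "A \<subseteq> {0..<m}"
  shows "card (sumset_mod m A {b}) = card A"
proof -
  have "sumset_mod m A {b} = (\<lambda>a. (b + a) mod m) ` A"
    unfolding sumset_mod_def by (auto simp: add.commute)
  moreover have "inj_on (\<lambda>a. (b + a) mod m) A"
    using assms bij_betw_add_mod[of m b] by (cases "0 < m") (auto intro: inj_on_subset simp: bij_betw_def)
  ultimately show ?thesis by (simp add: card_image)
qed

lemma sumset_mod_full:
  assumes "b \<in> B"
  shows "sumset_mod m {0..<m} B = {0..<m}"
proof
  show "sumset_mod m {0..<m} B \<subseteq> {0..<m}"
    by (cases "0 < m") (auto simp: sumset_mod_subset sumset_mod_def)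
  show "{0..<m} \<subseteq> sumset_mod m {0..<m} B"
  proof
    fix y assume "y \<in> {0..<m}"
    then have "y = ((y - b) mod m + b) mod m" by (simp add: mod_add_left_eq)
    then show "y \<in> sumset_mod m {0..<m} B"
      using \<open>b \<in> B\<close> \<open>y \<in> {0..<m}\<close> unfolding sumset_mod_def by force
  qed
qed

text \<open>Davenport's transform: with \<open>e = a - b\<close>, take \<open>A' = A \<union> (e + B)\<close> and
\<open>B' = {c \<in> B. e + c \<in> A}\<close>; the hypothesis on \<open>b'\<close> makes \<open>B'\<close> a proper subset of \<open>B\<close>.\<close>

lemma sumset_mod_transform:
  fixes m :: int
  assumes A: "A \<subseteq> {0..<m}" and B: "B \<subseteq> {0..<m}"
    and a: "a \<in> A" and b: "b \<in> B" and b': "b' \<in> B" and notin: "(a + b' - b) mod m \<notin> A"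
  obtains A' B' where "A' \<subseteq> {0..<m}" "A \<subseteq> A'" "b \<in> B'" "B' \<subset> B"
    "card A' + card B' = card A + card B" "sumset_mod m A' B' \<subseteq> sumset_mod m A B"
proof
  define h where "h c = (a - b + c) mod m" for c
  define A' where "A' = A \<union> h ` B"
  define B' where "B' = {c \<in> B. h c \<in> A}"
  have "0 < m" using A a by auto
  have fin: "finite A" "finite B" using A B finite_subset by auto
  show "A' \<subseteq> {0..<m}" "A \<subseteq> A'"
    unfolding A'_def h_def using A \<open>0 < m\<close> by auto
  show "b \<in> B'"
    unfolding B'_def h_def using a b A by auto
  have "h b' \<notin> A"
    using notin unfolding h_def by (simp add: algebra_simps)
  then show "B' \<subset> B"
    unfolding B'_def using b' by blast
  have "inj_on h B"
    unfolding h_def using bij_betw_add_mod[OF \<open>0 < m\<close>, of "a - b"] B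
    by (auto simp: bij_betw_def intro: inj_on_subset)
  have "A' = A \<union> h ` (B - B')" "A \<inter> h ` (B - B') = {}"
    unfolding A'_def B'_def by auto
  then have "card A' = card A + card (B - B')"
    using fin \<open>inj_on h B\<close> by (simp add: card_Un_disjoint card_image inj_on_subset[of h B])
  moreover have "card B = card (B - B') + card B'"
    using fin unfolding B'_def by (simp add: card_Diff_subset card_mono)
  ultimately show "card A' + card B' = card A + card B" by simp
  show "sumset_mod m A' B' \<subseteq> sumset_mod m A B"
  proof
    fix s assume "s \<in> sumset_mod m A' B'"
    then obtain x c where x: "x \<in> A'" and c: "c \<in> B" "h c \<in> A" and s: "s = (x + c) mod m"
      unfolding sumset_mod_def B'_def by auto
    show "s \<in> sumset_mod m A B"
    proof (cases "x \<in> A")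
      case True
      then show ?thesis using c s unfolding sumset_mod_def by auto
    next
      case False
      then obtain c' where "c' \<in> B" "x = h c'" using x unfolding A'_def by auto
      then have "s = (h c + c') mod m"
        unfolding s h_def by (simp add: mod_add_left_eq mod_add_right_eq algebra_simps)
      then show ?thesis using \<open>c' \<in> B\<close> c unfolding sumset_mod_def by auto
    qed
  qed
qed

theorem cauchy_davenport:
  assumes "prime p" "A \<subseteq> {0..<int p}" "B \<subseteq> {0..<int p}" "A \<noteq> {}" "B \<noteq> {}"
  shows "min p (card A + card B - 1) \<le> card (sumset_mod (int p) A B)"
  using assms(2-)
proof (induction "card B" arbitrary: A B rule: less_induct)
  case less
  have "0 < int p" using \<open>prime p\<close> prime_gt_0_nat by simp
  have fin: "finite A" "finite B" "finite (sumset_mod (int p) A B)"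
    using less.prems(1,2) sumset_mod_subset[OF \<open>0 < int p\<close>]
    by (meson finite_atLeastLessThan_int rev_finite_subset)+
  show ?case
  proof (cases "card B = 1")
    case True
    then obtain b where "B = {b}" by (auto simp: card_Suc_eq)
    then show ?thesis using card_sumset_mod_singleton less.prems by simp
  next
    case False
    obtain b where "b \<in> B" using less.prems by auto
    moreover from False have "B \<noteq> {b}" by auto
    ultimately obtain b' where b: "b \<in> B" "b' \<in> B" "b \<noteq> b'" by blast
    show ?thesis
    proof (cases "\<forall>a\<in>A. (a + (b' - b)) mod int p \<in> A")
      case True
      have "b \<in> {0..<int p}" "b' \<in> {0..<int p}" using b less.prems(2) by auto
      then have "b' mod int p \<noteq> b mod int p" using b(3) by simp
      then have "\<not> int p dvd b' - b" by (simp add: mod_eq_dvd_iff)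
      then have "coprime (b' - b) (int p)"
        using \<open>prime p\<close> by (simp add: prime_imp_coprime coprime_commute)
      then have "A = {0..<int p}"
        using closed_under_add_mod_eq_residues less.prems True by blast
      then show ?thesis using sumset_mod_full[OF b(1)] by simp
    next
      case False
      then obtain a where a: "a \<in> A" "(a + b' - b) mod int p \<notin> A"
        by (auto simp: algebra_simps)
      obtain A' B' where A': "A' \<subseteq> {0..<int p}" "A \<subseteq> A'" "b \<in> B'" "B' \<subset> B"
        and card: "card A' + card B' = card A + card B"
        and sub: "sumset_mod (int p) A' B' \<subseteq> sumset_mod (int p) A B"
        by (rule sumset_mod_transform[OF less.prems(1,2) a(1) b(1,2) a(2)])
      have "min p (card A' + card B' - 1) \<le> card (sumset_mod (int p) A' B')"
        using A' less.prems by (intro less.hyps) (auto simp: psubset_card_mono fin)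
      also have "\<dots> \<le> card (sumset_mod (int p) A B)"
        using card_mono[OF fin(3) sub] .
      finally show ?thesis using card by simp
    qed
  qed
qed

corollary cauchy_davenport_diff:
  assumes "prime p" "A \<subseteq> {0..<int p}" "A \<noteq> {}"
  shows "min p (2 * card A - 1) \<le> card {(a - b) mod int p | a b. a \<in> A \<and> b \<in> A}"
proof -
  let ?N = "(\<lambda>b. (- b) mod int p) ` A"
  have "0 < int p" using \<open>prime p\<close> prime_gt_0_nat by simp
  have "inj_on (\<lambda>b. (- b) mod int p) A"
    using bij_betw_diff_mod[OF \<open>0 < int p\<close>, of 0] assms(2)
    by (auto simp: bij_betw_def intro: inj_on_subset)
  then have "min p (2 * card A - 1) = min p (card A + card ?N - 1)"
    by (simp add: card_image mult_2)
  also have "\<dots> \<le> card (sumset_mod p A ?N)"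
    using assms \<open>0 < int p\<close> by (intro cauchy_davenport) auto
  also have "sumset_mod p A ?N = {(a - b) mod int p | a b. a \<in> A \<and> b \<in> A}"
    unfolding sumset_mod_def by (force simp: mod_add_right_eq)
  finally show ?thesis .
qed

section \<open>Convolution and correlation modulo \<open>m\<close>\<close>

definition conv_mod :: "int \<Rightarrow> (int \<Rightarrow> real) \<Rightarrow> (int \<Rightarrow> real) \<Rightarrow> int \<Rightarrow> real" where
  "conv_mod m P Q c = (\<Sum>b\<in>{0..<m}. P b * Q ((c - b) mod m))"

definition corr_mod :: "int \<Rightarrow> (int \<Rightarrow> real) \<Rightarrow> int \<Rightarrow> real" where
  "corr_mod m Q d = (\<Sum>y\<in>{0..<m}. Q y * Q ((y + d) mod m))"

lemma conv_mod_mod [simp]: "conv_mod m P Q (c mod m) = conv_mod m P Q c"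
  by (simp add: conv_mod_def mod_diff_left_eq)

lemma corr_mod_mod [simp]: "corr_mod m Q (d mod m) = corr_mod m Q d"
  by (simp add: corr_mod_def mod_add_right_eq)

lemma pmf_bind_finite_support:
  assumes "set_pmf q \<subseteq> S" "finite S"
  shows "pmf (bind_pmf q f) x = (\<Sum>y\<in>S. pmf q y * pmf (f y) x)"
  unfolding pmf_bind by (subst integral_measure_pmf[of S]) (use assms in auto)

lemma pmf_bind_add_mod:
  fixes m :: int
  assumes "set_pmf q \<subseteq> {0..<m}" "x \<in> {0..<m}"
  shows "pmf (bind_pmf q (\<lambda>c. return_pmf ((t + c) mod m))) x = pmf q ((x - t) mod m)"
proof -
  have "(t + c) mod m = x \<longleftrightarrow> c = (x - t) mod m" if "c \<in> {0..<m}" for c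
    using that assms(2) by (auto simp: mod_add_right_eq mod_diff_left_eq)
  then have "pmf (bind_pmf q (\<lambda>c. return_pmf ((t + c) mod m))) x
      = (\<Sum>c\<in>{0..<m}. if c = (x - t) mod m then pmf q c else 0)"
    unfolding pmf_bind_finite_support[OF assms(1) finite_atLeastLessThan_int] pmf_return
    by (intro sum.cong) (auto simp: indicator_def)
  also have "\<dots> = pmf q ((x - t) mod m)"
    using assms(2) by simp
  finally show ?thesis .
qed

lemma pmf_sum3_law:
  assumes "set_pmf q \<subseteq> {0..<int p}" "x \<in> {0..<int p}"
  shows "pmf (sum3_law p q) x = conv_mod p (pmf q) (conv_mod p (pmf q) (pmf q)) x"
proof -
  have "pmf (sum3_law p q) x = (\<Sum>a\<in>{0..<int p}. pmf q a * (\<Sum>b\<in>{0..<int p}. pmf q b *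
      pmf (bind_pmf q (\<lambda>c. return_pmf ((a + b + c) mod int p))) x))"
    unfolding sum3_law_def by (simp add: pmf_bind_finite_support[OF assms(1)])
  then show ?thesis
    using assms by (simp add: pmf_bind_add_mod conv_mod_def mod_diff_left_eq diff_diff_eq)
qed

lemma conv_mod_le:
  assumes "\<forall>b\<in>{0..<m}. 0 \<le> P b" "sum P {0..<m} = 1" "\<forall>y\<in>{0..<m}. Q y \<le> lam"
  shows "conv_mod m P Q c \<le> lam"
proof -
  have "0 < m" using assms(2) by (cases "0 < m") auto
  have "conv_mod m P Q c \<le> (\<Sum>b\<in>{0..<m}. P b * lam)"
    unfolding conv_mod_def using assms(1,3) \<open>0 < m\<close> by (intro sum_mono mult_left_mono) auto
  also have "\<dots> = lam"
    using assms(2) by (simp add: sum_distrib_right[symmetric])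
  finally show ?thesis .
qed

lemma corr_mod_nonneg:
  assumes "\<forall>y\<in>{0..<m}. 0 \<le> Q y"
  shows "0 \<le> corr_mod m Q d"
  unfolding corr_mod_def using assms by (intro sum_nonneg) auto

lemma sum_corr_mod:
  fixes m :: int
  assumes "0 < m"
  shows "(\<Sum>d\<in>{0..<m}. corr_mod m Q d) = (sum Q {0..<m})\<^sup>2"
proof -
  have "(\<Sum>d\<in>{0..<m}. corr_mod m Q d) = (\<Sum>y\<in>{0..<m}. Q y * (\<Sum>d\<in>{0..<m}. Q ((y + d) mod m)))"
    unfolding corr_mod_def by (subst sum.swap) (simp add: sum_distrib_left)
  also have "\<dots> = (sum Q {0..<m})\<^sup>2"
    by (simp add: sum_add_mod[OF assms] power2_eq_square sum_distrib_right)
  finally show ?thesis .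
qed

lemma card_corr_mod_ge_le:
  fixes m :: int
  assumes "0 < m" "\<forall>y\<in>{0..<m}. 0 \<le> Q y" "sum Q {0..<m} = 1"
  shows "real (card {d \<in> {0..<m}. t \<le> corr_mod m Q d}) * t \<le> 1"
proof -
  have "real (card {d \<in> {0..<m}. t \<le> corr_mod m Q d}) * t
      \<le> sum (corr_mod m Q) {d \<in> {0..<m}. t \<le> corr_mod m Q d}"
    by (intro sum_bounded_below) simp
  also have "\<dots> \<le> sum (corr_mod m Q) {0..<m}"
    using assms(2) by (intro sum_mono2 corr_mod_nonneg) auto
  also have "\<dots> = 1"
    using sum_corr_mod[OF assms(1)] assms(3) by simp
  finally show ?thesis .
qed

lemma conv_mod_le_corr_mod:
  fixes Q :: "int \<Rightarrow> real" and m :: int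
  assumes "0 < m"
  shows "2 * conv_mod m Q Q (x - a) + 2 * conv_mod m Q Q (x - b)
    \<le> corr_mod m Q (a - b) + 3 * (\<Sum>z\<in>{0..<m}. (Q z)\<^sup>2)"
proof -
  define v where "v z = Q ((x - a - z) mod m)" for z
  define w where "w z = Q ((x - b - z) mod m)" for z
  have "4 * (Q z * v z) + 4 * (Q z * w z) \<le> 2 * (v z * w z) + (v z)\<^sup>2 + (w z)\<^sup>2 + 4 * (Q z)\<^sup>2"
    for z
    using zero_le_power2[of "v z + w z - 2 * Q z"] by (simp add: power2_eq_square algebra_simps)
  then have "(\<Sum>z\<in>{0..<m}. 4 * (Q z * v z) + 4 * (Q z * w z))
      \<le> (\<Sum>z\<in>{0..<m}. 2 * (v z * w z) + (v z)\<^sup>2 + (w z)\<^sup>2 + 4 * (Q z)\<^sup>2)"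
    by (rule sum_mono)
  moreover have "(\<Sum>z\<in>{0..<m}. Q z * v z) = conv_mod m Q Q (x - a)"
    "(\<Sum>z\<in>{0..<m}. Q z * w z) = conv_mod m Q Q (x - b)"
    unfolding conv_mod_def v_def w_def by simp_all
  moreover have "(\<Sum>z\<in>{0..<m}. (v z)\<^sup>2) = (\<Sum>z\<in>{0..<m}. (Q z)\<^sup>2)"
    "(\<Sum>z\<in>{0..<m}. (w z)\<^sup>2) = (\<Sum>z\<in>{0..<m}. (Q z)\<^sup>2)"
    unfolding v_def w_def
    using sum_diff_mod[OF assms, of "\<lambda>y. (Q y)\<^sup>2" "x - a"]
      sum_diff_mod[OF assms, of "\<lambda>y. (Q y)\<^sup>2" "x - b"]
    by simp_all
  moreover have "(\<Sum>z\<in>{0..<m}. v z * w z) = corr_mod m Q (a - b)"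
  proof -
    have "((x - a - z) mod m + (a - b)) mod m = (x - b - z) mod m" for z
      by (simp only: mod_add_left_eq) (simp add: algebra_simps)
    then have "v z * w z = Q ((x - a - z) mod m) * Q (((x - a - z) mod m + (a - b)) mod m)" for z
      unfolding v_def w_def by simp
    then show ?thesis
      unfolding corr_mod_def
      using sum_diff_mod[OF assms, of "\<lambda>y. Q y * Q ((y + (a - b)) mod m)" "x - a"]
      by simp
  qed
  ultimately show ?thesis
    by (simp add: sum.distrib sum_distrib_left[symmetric])
qed

section \<open>The anti-concentration bound\<close>

lemma sum_square_le:
  fixes Q :: "'a \<Rightarrow> real"
  assumes "\<forall>y\<in>S. 0 \<le> Q y \<and> Q y \<le> lam"
  shows "(\<Sum>y\<in>S. (Q y)\<^sup>2) \<le> lam * sum Q S"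
  unfolding sum_distrib_left power2_eq_square using assms by (intro sum_mono mult_right_mono) auto

lemma weighted_mean_near_max_imp_mass:
  fixes Q g :: "'a \<Rightarrow> real"
  assumes "finite S" "\<forall>a\<in>S. 0 \<le> Q a" "sum Q S = 1" "\<forall>a\<in>S. g a \<le> M" "0 < M"
    and mean: "(1 - \<epsilon>) * M < (\<Sum>a\<in>S. Q a * g a)"
  shows "\<eta> - \<epsilon> < \<eta> * sum Q {a\<in>S. (1 - \<eta>) * M \<le> g a}"
proof -
  let ?G = "{a\<in>S. (1 - \<eta>) * M \<le> g a}"
  have "(\<Sum>a\<in>S. Q a * g a) \<le> (\<Sum>a\<in>S. (1 - \<eta>) * M * Q a + \<eta> * M * (if a \<in> ?G then Q a else 0))"
  proof (rule sum_mono)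
    fix a assume "a \<in> S"
    show "Q a * g a \<le> (1 - \<eta>) * M * Q a + \<eta> * M * (if a \<in> ?G then Q a else 0)"
    proof (cases "a \<in> ?G")
      case True
      have "Q a * g a \<le> Q a * M"
        using \<open>a \<in> S\<close> assms(2,4) by (intro mult_left_mono) auto
      then show ?thesis unfolding if_P[OF True] by (simp add: algebra_simps)
    next
      case False
      have "Q a * g a \<le> Q a * ((1 - \<eta>) * M)"
        using \<open>a \<in> S\<close> False assms(2) by (intro mult_left_mono) auto
      then show ?thesis unfolding if_not_P[OF False] by (simp add: algebra_simps)
    qed
  qed
  also have "\<dots> = (1 - \<eta>) * M + \<eta> * M * sum Q ?G"
    using assms(1,3) by (simp add: sum.distrib sum_distrib_left[symmetric] sum.inter_filter)
  finally have "(\<eta> - \<epsilon>) * M < (\<eta> * sum Q ?G) * M"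
    using mean by (simp add: algebra_simps)
  then show ?thesis using \<open>0 < M\<close> by simp
qed

lemma card_lam_le_of_difference_bound:
  fixes lam :: real
  assumes "0 < lam" "lam \<le> 9/10" "2 < real p * lam"
    and "min p (2 * n - 1) \<le> k" "real k * (96/100 * lam) \<le> 1"
  shows "real n * lam \<le> 99/100"
proof (cases "p \<le> k")
  case True
  then have "real p * (96/100 * lam) \<le> real k * (96/100 * lam)"
    using assms(1) by (intro mult_right_mono) auto
  moreover have "real p * (96/100 * lam) = 96/100 * (real p * lam)" by simp
  ultimately show ?thesis using assms(3,5) by linarith
next
  case False
  with assms(4) have "2 * real n - 1 \<le> real k" by linarith
  then have "(2 * real n - 1) * (96/100 * lam) \<le> real k * (96/100 * lam)"
    using assms(1) by (intro mult_right_mono) auto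
  moreover have "(2 * real n - 1) * (96/100 * lam) = 192/100 * (real n * lam) - 96/100 * lam"
    by (simp add: field_simps)
  ultimately show ?thesis using assms(2,5) by linarith
qed

lemma triple_conv_mod_le:
  fixes Q :: "int \<Rightarrow> real"
  assumes "prime p" and lam: "0 < lam" "lam \<le> 9/10" "2 < real p * lam"
    and Q: "\<forall>y\<in>{0..<int p}. 0 \<le> Q y \<and> Q y \<le> lam" and "sum Q {0..<int p} = 1"
  shows "conv_mod p Q (conv_mod p Q Q) x \<le> (1 - 1/10000) * lam"
proof (rule ccontr)
  define S where "S = {0..<int p}"
  define g where "g a = conv_mod p Q Q (x - a)" for a
  define G where "G = {a \<in> S. (1 - 1/100) * lam \<le> g a}"
  define D where "D = {d \<in> S. 96/100 * lam \<le> corr_mod p Q d}"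
  have "0 < int p" using \<open>prime p\<close> prime_gt_0_nat by simp
  have "finite S" unfolding S_def by simp
  then have fin: "finite G" "finite D" unfolding G_def D_def by auto
  have QS: "\<forall>y\<in>S. 0 \<le> Q y \<and> Q y \<le> lam" "sum Q S = 1"
    using assms unfolding S_def by simp_all
  have "conv_mod p Q (conv_mod p Q Q) x = (\<Sum>a\<in>S. Q a * g a)"
    unfolding S_def g_def by (simp only: conv_mod_def[of p Q "conv_mod p Q Q"] conv_mod_mod)
  moreover assume "\<not> ?thesis"
  ultimately have "(1 - 1/10000) * lam < (\<Sum>a\<in>S. Q a * g a)" by simp
  then have "1/100 - 1/10000 < 1/100 * sum Q G"
    unfolding G_def using QS \<open>finite S\<close> conv_mod_le[of p Q Q lam] \<open>0 < lam\<close>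
    by (intro weighted_mean_near_max_imp_mass) (auto simp: g_def S_def)
  moreover have "sum Q G \<le> real (card G) * lam"
    using QS by (intro sum_bounded_above) (auto simp: G_def)
  ultimately have card_G: "99/100 < real (card G) * lam" by linarith
  have "96/100 * lam \<le> corr_mod p Q (a - b)" if "a \<in> G" "b \<in> G" for a b
  proof -
    have "(\<Sum>z\<in>S. (Q z)\<^sup>2) \<le> lam"
      using sum_square_le[of S Q lam] QS by simp
    then show ?thesis
      using that conv_mod_le_corr_mod[OF \<open>0 < int p\<close>, of Q x a b]
      unfolding G_def g_def S_def by simp
  qed
  then have "{(a - b) mod int p | a b. a \<in> G \<and> b \<in> G} \<subseteq> D"
    unfolding D_def S_def using \<open>0 < int p\<close> by auto
  moreover have "G \<noteq> {}" using card_G by auto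
  moreover have "G \<subseteq> {0..<int p}" by (auto simp: G_def S_def)
  ultimately have "min p (2 * card G - 1) \<le> card D"
    using cauchy_davenport_diff[OF \<open>prime p\<close>] card_mono[OF fin(2)] le_trans by blast
  moreover have "real (card D) * (96/100 * lam) \<le> 1"
    unfolding D_def S_def using Q assms(6) by (intro card_corr_mod_ge_le[OF \<open>0 < int p\<close>]) auto
  ultimately show False
    using card_lam_le_of_difference_bound[OF lam] card_G by fastforce
qed

theorem theorem3p3:
  shows "\<exists>C3::real. C3 < 1 \<and>
    (\<forall>(lam::real) (p::nat) (q::int pmf).
       0 < lam \<and> lam \<le> 9/10 \<and> prime p \<and> real p > 2 / lam \<and>
       set_pmf q \<subseteq> {0..<int p} \<and>
       (\<forall>x\<in>{0..<int p}. pmf q x \<le> lam)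
       \<longrightarrow> (\<forall>x\<in>{0..<int p}. pmf (sum3_law p q) x \<le> C3 * lam))"
proof (intro exI[of _ "1 - 1/10000"] conjI allI impI ballI)
  fix lam :: real and p :: nat and q :: "int pmf" and x :: int
  assume "0 < lam \<and> lam \<le> 9/10 \<and> prime p \<and> real p > 2 / lam \<and> set_pmf q \<subseteq> {0..<int p} \<and>
    (\<forall>x\<in>{0..<int p}. pmf q x \<le> lam)"
  then have lam: "0 < lam" "lam \<le> 9/10" "2 < real p * lam" and "prime p"
    and q: "set_pmf q \<subseteq> {0..<int p}" "\<forall>y\<in>{0..<int p}. 0 \<le> pmf q y \<and> pmf q y \<le> lam"
    by (auto simp: field_simps)
  assume "x \<in> {0..<int p}"
  then have "pmf (sum3_law p q) x = conv_mod p (pmf q) (conv_mod p (pmf q) (pmf q)) x"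
    using pmf_sum3_law q(1) by blast
  also have "\<dots> \<le> (1 - 1/10000) * lam"
    using \<open>prime p\<close> lam q by (intro triple_conv_mod_le) (auto simp: sum_pmf_eq_1)
  finally show "pmf (sum3_law p q) x \<le> (1 - 1/10000) * lam" .
qed simp

end
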